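(* For every rooted realizable chirotope $(\chi,u)$, there exists $\varepsilon>0$ such that for every $\delta>0$ there exists a right-$(\delta,\varepsilon)$-squeezing of $(\chi,u)$.
   Context: A chirotope on a finite set $E$ is a map $\chi$ from ordered triples of distinct elements of $E$ to $\{-1,1\}$ satisfying the usual alternating symmetry and the interiority and transitivity axioms. It is realizable if there exist points $\mathfrak p_e\in\mathbb R^2$ ($e\in E$), no three collinear, such that $\chi(x,y,z)=1$ iff $\mathfrak p_x,\mathfrak p_y,\mathfrak p_z$ are in counterclockwise order (a realization of $\chi$). A rooted chirotope is a pair $(\chi,u)$ with $u$ an extreme element of $\chi$ (a convex hull vertex: there is $y\neq u$ with $\chi(u,y,z)$ constant over all other $z$); $u^+$ (resp. $u^-$) is the successor (resp. predecessor) of $u$ in counterclockwise order on the convex hull, i.e. the element $y$ with $\chi(u,y,z)=1$ (resp. $\chi(y,u,z)=1$) for all $z\notin\{u,y\}$. A right-$(\delta,\varepsilon)$-squeezing of a rooted chirotope $(\chi,u)$ is a realization $\mathcal P=\{\mathfrak p_e\}$ of $\chi$ such that $\mathfrak p_u=(0,1)$, $\mathfrak p_{u^+}=(0,0)$, $\mathfrak p_{u^-}=(1,0)$, $\mathcal P\setminus\{\mathfrak p_u,\mathfrak p_{u^+}\}\subseteq[\varepsilon,1]\times[-\delta,\delta]$, and every line through two points of $\mathcal P\setminus\{\mathfrak p_u\}$ has slope in $[-\delta,\delta]$. *)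

theory Defs
  imports Main "HOL-Analysis.Analysis"
begin

text \<open>A chirotope on a finite set E, given by a map chi on triples; only its values on
  ordered triples of pairwise distinct elements of E matter (Knuth's CC-system axioms).\<close>

definition distinct3 :: "'a \<Rightarrow> 'a \<Rightarrow> 'a \<Rightarrow> bool" where
  "distinct3 x y z \<longleftrightarrow> x \<noteq> y \<and> y \<noteq> z \<and> x \<noteq> z"

definition chirotope :: "'a set \<Rightarrow> ('a \<Rightarrow> 'a \<Rightarrow> 'a \<Rightarrow> int) \<Rightarrow> bool" where
  "chirotope E chi \<longleftrightarrow> finite E \<and>
    (\<forall>x\<in>E. \<forall>y\<in>E. \<forall>z\<in>E. distinct3 x y z \<longrightarrow>
        chi x y z \<in> {-1, 1} \<and> chi y z x = chi x y z \<and> chi y x z = - chi x y z) \<and>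
    (\<comment> \<open>interiority\<close>
     \<forall>x\<in>E. \<forall>y\<in>E. \<forall>z\<in>E. \<forall>t\<in>E. distinct3 x y z \<and> t \<notin> {x, y, z} \<longrightarrow>
        chi t y z = 1 \<and> chi x t z = 1 \<and> chi x y t = 1 \<longrightarrow> chi x y z = 1) \<and>
    (\<comment> \<open>transitivity\<close>
     \<forall>t\<in>E. \<forall>s\<in>E. \<forall>x\<in>E. \<forall>y\<in>E. \<forall>z\<in>E.
        distinct3 x y z \<and> t \<noteq> s \<and> t \<notin> {x, y, z} \<and> s \<notin> {x, y, z} \<longrightarrow>
        chi t s x = 1 \<and> chi t s y = 1 \<and> chi t s z = 1 \<and> chi t x y = 1 \<and> chi t y z = 1
        \<longrightarrow> chi t x z = 1)"

definition ccw :: "real \<times> real \<Rightarrow> real \<times> real \<Rightarrow> real \<times> real \<Rightarrow> bool" where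
  "ccw p q r \<longleftrightarrow>
     (fst q - fst p) * (snd r - snd p) - (snd q - snd p) * (fst r - fst p) > 0"

definition collinear3 :: "real \<times> real \<Rightarrow> real \<times> real \<Rightarrow> real \<times> real \<Rightarrow> bool" where
  "collinear3 p q r \<longleftrightarrow>
     (fst q - fst p) * (snd r - snd p) - (snd q - snd p) * (fst r - fst p) = 0"

definition realization :: "'a set \<Rightarrow> ('a \<Rightarrow> 'a \<Rightarrow> 'a \<Rightarrow> int) \<Rightarrow> ('a \<Rightarrow> real \<times> real) \<Rightarrow> bool" where
  "realization E chi p \<longleftrightarrow>
     (\<forall>x\<in>E. \<forall>y\<in>E. \<forall>z\<in>E. distinct3 x y z \<longrightarrow>
        \<not> collinear3 (p x) (p y) (p z) \<and> (chi x y z = 1 \<longleftrightarrow> ccw (p x) (p y) (p z)))"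

definition realizable :: "'a set \<Rightarrow> ('a \<Rightarrow> 'a \<Rightarrow> 'a \<Rightarrow> int) \<Rightarrow> bool" where
  "realizable E chi \<longleftrightarrow> (\<exists>p. realization E chi p)"

definition extreme :: "'a set \<Rightarrow> ('a \<Rightarrow> 'a \<Rightarrow> 'a \<Rightarrow> int) \<Rightarrow> 'a \<Rightarrow> bool" where
  "extreme E chi u \<longleftrightarrow> u \<in> E \<and>
     (\<exists>y\<in>E. y \<noteq> u \<and> (\<exists>c. \<forall>z\<in>E - {u, y}. chi u y z = c))"

definition rooted_chirotope :: "'a set \<Rightarrow> ('a \<Rightarrow> 'a \<Rightarrow> 'a \<Rightarrow> int) \<Rightarrow> 'a \<Rightarrow> bool" where
  "rooted_chirotope E chi u \<longleftrightarrow> chirotope E chi \<and> extreme E chi u"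

definition succ_hull :: "'a set \<Rightarrow> ('a \<Rightarrow> 'a \<Rightarrow> 'a \<Rightarrow> int) \<Rightarrow> 'a \<Rightarrow> 'a" where
  "succ_hull E chi u = (THE y. y \<in> E \<and> y \<noteq> u \<and> (\<forall>z\<in>E - {u, y}. chi u y z = 1))"

definition pred_hull :: "'a set \<Rightarrow> ('a \<Rightarrow> 'a \<Rightarrow> 'a \<Rightarrow> int) \<Rightarrow> 'a \<Rightarrow> 'a" where
  "pred_hull E chi u = (THE y. y \<in> E \<and> y \<noteq> u \<and> (\<forall>z\<in>E - {u, y}. chi y u z = 1))"

definition right_squeezing ::
  "'a set \<Rightarrow> ('a \<Rightarrow> 'a \<Rightarrow> 'a \<Rightarrow> int) \<Rightarrow> 'a \<Rightarrow> real \<Rightarrow> real \<Rightarrow> ('a \<Rightarrow> real \<times> real) \<Rightarrow> bool" where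
  "right_squeezing E chi u \<delta> \<epsilon> p \<longleftrightarrow>
     realization E chi p \<and>
     p u = (0, 1) \<and>
     p (succ_hull E chi u) = (0, 0) \<and>
     p (pred_hull E chi u) = (1, 0) \<and>
     (\<forall>e\<in>E. p e \<noteq> p u \<and> p e \<noteq> p (succ_hull E chi u) \<longrightarrow>
        p e \<in> {\<epsilon>..1} \<times> {-\<delta>..\<delta>}) \<and>
     (\<forall>x\<in>E - {u}. \<forall>y\<in>E - {u}. p x \<noteq> p y \<longrightarrow>
        fst (p x) \<noteq> fst (p y) \<and>
        (snd (p y) - snd (p x)) / (fst (p y) - fst (p x)) \<in> {-\<delta>..\<delta>})"

end

theory Submission
  imports Defs
begin

(* Proof idea: fix a realization q and let s and w be the hull successor and predecessor of u.
   The projective map sending q u to the vertical point at infinity, q s to (0, 0) and q w to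
   (1, 0) is defined at every other point, has a square as determinant, and hence preserves the
   orientation of triangles avoiding u; it maps the points into the strip 0 \<le> x \<le> 1 and orders
   them by x-coordinate as they are ordered angularly around q u. Put u at (0, 1) and compress
   the image vertically by a factor c > 0: triangles avoiding u keep their orientation, triangles
   through u are oriented by the x-order once c is small, and all heights and slopes tend to 0
   with c. The bound \<epsilon> is the least x-coordinate of a point other than u and s; it does not
   depend on c. *)

type_synonym point = "real \<times> real"

definition det3 :: "point \<Rightarrow> point \<Rightarrow> point \<Rightarrow> real" where
  "det3 p q r = (fst q - fst p) * (snd r - snd p) - (snd q - snd p) * (fst r - fst p)"

lemma det3_rotate: "det3 a b c = det3 b c a"
  by (simp add: det3_def algebra_simps)

lemma det3_swap: "det3 b a c = - det3 a b c"
  by (simp add: det3_def algebra_simps)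

lemma det3_degenerate [simp]: "det3 a a b = 0" "det3 a b b = 0" "det3 a b a = 0"
  by (simp_all add: det3_def algebra_simps)

lemma det3_swap_last: "det3 a c b = - det3 a b c"
  by (simp add: det3_def algebra_simps)

lemma det3_inner_identity:
  "det3 u w z * ((y - u) \<bullet> (y - u))
     = ((y - u) \<bullet> (w - u)) * det3 u y z - ((y - u) \<bullet> (z - u)) * det3 u y w"
  by (simp add: det3_def inner_prod_def algebra_simps)

lemma det3_mirror:
  "det3 (fst a, - snd a) (fst b, - snd b) (fst c, - snd c) = - det3 a b c"
  by (simp add: det3_def algebra_simps)

lemma det3_scale_snd:
  "det3 (x1, c * y1) (x2, c * y2) (x3, c * y3) = c * det3 (x1, y1) (x2, y2) (x3, y3)"
  by (simp add: det3_def algebra_simps)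

lemma det3_homogeneous:
  assumes "z1 \<noteq> 0" "z2 \<noteq> 0" "z3 \<noteq> 0"
  shows "det3 (x1 / z1, y1 / z1) (x2 / z2, y2 / z2) (x3 / z3, y3 / z3) * (z1 * z2 * z3)
         = x1 * (y2 * z3 - y3 * z2) - y1 * (x2 * z3 - x3 * z2) + z1 * (x2 * y3 - x3 * y2)"
  using assms unfolding det3_def by (simp add: field_simps)

definition chart_denom :: "point \<Rightarrow> point \<Rightarrow> point \<Rightarrow> point \<Rightarrow> real" where
  "chart_denom U S W P = det3 W U P + det3 U S P"

(* The projective map sending U to the vertical point at infinity, S to (0, 0) and W to (1, 0);
   in homogeneous coordinates it is linear with determinant (det3 U S W)\<^sup>2. *)
definition chart :: "point \<Rightarrow> point \<Rightarrow> point \<Rightarrow> point \<Rightarrow> point" where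
  "chart U S W P = (det3 U S P / chart_denom U S W P, det3 U S W / chart_denom U S W P - 1)"

lemma det3_chart:
  assumes "chart_denom U S W a \<noteq> 0" "chart_denom U S W b \<noteq> 0" "chart_denom U S W c \<noteq> 0"
  shows "det3 (chart U S W a) (chart U S W b) (chart U S W c)
           * (chart_denom U S W a * chart_denom U S W b * chart_denom U S W c)
         = (det3 U S W)\<^sup>2 * det3 a b c"
proof -
  let ?D = "det3 U S W" and ?B = "det3 U S" and ?N = "chart_denom U S W"
  have chart_homogeneous: "chart U S W P = (?B P / ?N P, (?D - ?N P) / ?N P)"
    if "?N P \<noteq> 0" for P
    using that by (simp add: chart_def diff_divide_distrib)
  have "?B a * ((?D - ?N b) * ?N c - (?D - ?N c) * ?N b)
        - (?D - ?N a) * (?B b * ?N c - ?B c * ?N b)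
        + ?N a * (?B b * (?D - ?N c) - ?B c * (?D - ?N b)) = ?D\<^sup>2 * det3 a b c"
    unfolding chart_denom_def det3_def power2_eq_square by algebra
  then show ?thesis
    using assms by (simp add: chart_homogeneous det3_homogeneous)
qed

lemma fst_chart_diff:
  assumes "chart_denom U S W a \<noteq> 0" "chart_denom U S W b \<noteq> 0"
  shows "fst (chart U S W b) - fst (chart U S W a)
         = det3 U S W * det3 U a b / (chart_denom U S W a * chart_denom U S W b)"
  using assms unfolding chart_def chart_denom_def det3_def
  by (simp add: field_simps)

lemma hull_pred_exists:
  fixes q :: "'a \<Rightarrow> point"
  assumes "finite F" and third: "\<exists>z\<in>F. z \<notin> {u, y}"
    and left: "\<And>z. z \<in> F - {u, y} \<Longrightarrow> det3 (q u) (q y) (q z) > 0"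
    and nondeg: "\<And>a b. a \<in> F - {u} \<Longrightarrow> b \<in> F - {u} \<Longrightarrow> a \<noteq> b \<Longrightarrow> det3 (q u) (q a) (q b) \<noteq> 0"
  obtains w where "w \<in> F" "w \<noteq> u" "\<And>z. z \<in> F - {u, w} \<Longrightarrow> det3 (q w) (q u) (q z) > 0"
proof -
  let ?d = "q y - q u"
  \<comment> \<open>cot z is the cotangent of the angle at q u from q y to q z; for the point w maximising
     this angle, all other points lie to the left of the ray from q w to q u.\<close>
  define cot where "cot z = (?d \<bullet> (q z - q u)) / det3 (q u) (q y) (q z)" for z
  obtain w where w: "w \<in> F - {u, y}" and w_min: "\<And>z. z \<in> F - {u, y} \<Longrightarrow> cot w \<le> cot z"
    using ex_is_arg_min_if_finite[of "F - {u, y}" cot] assms(1) third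
    by (auto simp: is_arg_min_linorder)
  have "?d \<noteq> 0"
    using left[OF w] by (auto simp: det3_def)
  then have d_pos: "?d \<bullet> ?d > 0"
    by simp
  have "det3 (q w) (q u) (q z) > 0" if z: "z \<in> F - {u, w}" for z
  proof (cases "z = y")
    case True
    then show ?thesis
      using left[OF w] det3_rotate by metis
  next
    case False
    with z have z': "z \<in> F - {u, y}"
      by auto
    have "(?d \<bullet> (q w - q u)) * det3 (q u) (q y) (q z) \<le> (?d \<bullet> (q z - q u)) * det3 (q u) (q y) (q w)"
      using w_min[OF z'] left[OF w] left[OF z'] by (simp add: cot_def divide_simps)
    then have "det3 (q u) (q w) (q z) * (?d \<bullet> ?d) \<le> 0"
      by (simp add: det3_inner_identity)
    moreover have "det3 (q u) (q w) (q z) \<noteq> 0"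
      using nondeg w z by auto
    ultimately have "det3 (q u) (q w) (q z) < 0"
      using d_pos by (simp add: mult_le_0_iff)
    then show ?thesis
      by (simp add: det3_swap[of "q w"])
  qed
  then show ?thesis
    using that w by blast
qed

lemma hull_succ_exists:
  fixes q :: "'a \<Rightarrow> point"
  assumes "finite F" and third: "\<exists>z\<in>F. z \<notin> {u, y}"
    and right: "\<And>z. z \<in> F - {u, y} \<Longrightarrow> det3 (q y) (q u) (q z) > 0"
    and nondeg: "\<And>a b. a \<in> F - {u} \<Longrightarrow> b \<in> F - {u} \<Longrightarrow> a \<noteq> b \<Longrightarrow> det3 (q u) (q a) (q b) \<noteq> 0"
  obtains s where "s \<in> F" "s \<noteq> u" "\<And>z. z \<in> F - {u, s} \<Longrightarrow> det3 (q u) (q s) (q z) > 0"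
proof -
  define q' where "q' e = (fst (q e), - snd (q e))" for e
  have mirror: "det3 (q' a) (q' b) (q' c) = - det3 (q a) (q b) (q c)" for a b c
    unfolding q'_def by (rule det3_mirror)
  obtain s where "s \<in> F" "s \<noteq> u" "\<And>z. z \<in> F - {u, s} \<Longrightarrow> det3 (q' s) (q' u) (q' z) > 0"
  proof (rule hull_pred_exists[of F u y q'])
    show "det3 (q' u) (q' y) (q' z) > 0" if "z \<in> F - {u, y}" for z
      using right[OF that] by (simp add: mirror det3_swap[of "q y"])
  qed (use assms mirror in auto)
  then show ?thesis
    using that by (simp add: mirror det3_swap[of "q s"])
qed

lemma realization_det3:
  assumes "realization E chi q" "x \<in> E" "y \<in> E" "z \<in> E" "distinct3 x y z"
  shows "det3 (q x) (q y) (q z) \<noteq> 0" and "chi x y z = 1 \<longleftrightarrow> det3 (q x) (q y) (q z) > 0"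
  using assms by (auto simp: realization_def collinear3_def ccw_def det3_def)

lemma realization_transfer:
  assumes "realization E chi q"
    and "\<And>x y z. x \<in> E \<Longrightarrow> y \<in> E \<Longrightarrow> z \<in> E \<Longrightarrow> distinct3 x y z \<Longrightarrow>
           det3 (p x) (p y) (p z) * det3 (q x) (q y) (q z) > 0"
  shows "realization E chi p"
  unfolding realization_def collinear3_def ccw_def det3_def[symmetric]
proof (intro ballI impI conjI)
  fix x y z assume xyz: "x \<in> E" "y \<in> E" "z \<in> E" "distinct3 x y z"
  then have same_sign: "det3 (p x) (p y) (p z) * det3 (q x) (q y) (q z) > 0"
    by (rule assms(2))
  then show "det3 (p x) (p y) (p z) \<noteq> 0"
    by auto
  show "chi x y z = 1 \<longleftrightarrow> det3 (p x) (p y) (p z) > 0"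
    using realization_det3(2)[OF assms(1) xyz] same_sign by (auto simp: zero_less_mult_iff)
qed

lemma realization_transfer_apex:
  assumes "realization E chi q"
    and apex: "\<And>a b. a \<in> E - {u} \<Longrightarrow> b \<in> E - {u} \<Longrightarrow> a \<noteq> b \<Longrightarrow>
                 det3 (p u) (p a) (p b) * det3 (q u) (q a) (q b) > 0"
    and avoid: "\<And>a b c. a \<in> E - {u} \<Longrightarrow> b \<in> E - {u} \<Longrightarrow> c \<in> E - {u} \<Longrightarrow> distinct3 a b c \<Longrightarrow>
                 det3 (p a) (p b) (p c) * det3 (q a) (q b) (q c) > 0"
  shows "realization E chi p"
proof (rule realization_transfer[OF assms(1)])
  fix x y z assume xyz: "x \<in> E" "y \<in> E" "z \<in> E" "distinct3 x y z"
  consider "x = u" | "y = u" | "z = u" | "x \<noteq> u" "y \<noteq> u" "z \<noteq> u"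
    by blast
  then show "det3 (p x) (p y) (p z) * det3 (q x) (q y) (q z) > 0"
  proof cases
    case 1
    then show ?thesis
      using apex xyz by (auto simp: distinct3_def)
  next
    case 2
    then show ?thesis
      using apex[of z x] xyz det3_rotate[of "p x"] det3_rotate[of "q x"] by (auto simp: distinct3_def)
  next
    case 3
    then show ?thesis
      using apex[of x y] xyz det3_rotate[of "p z", symmetric] det3_rotate[of "q z", symmetric]
      by (auto simp: distinct3_def)
  next
    case 4
    then show ?thesis
      using avoid xyz by simp
  qed
qed

definition squeeze :: "'a \<Rightarrow> ('a \<Rightarrow> point) \<Rightarrow> real \<Rightarrow> 'a \<Rightarrow> point" where
  "squeeze u r c e = (if e = u then (0, 1) else (fst (r e), c * snd (r e)))"

lemma det3_squeeze_apex:
  "det3 (0, 1) (x1, c * y1) (x2, c * y2) = (x2 - x1) + c * (x1 * y2 - y1 * x2)"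
  by (simp add: det3_def algebra_simps)

lemma eventually_squeeze_apex_sign:
  assumes "(x2 - x1) * k > 0"
  shows "eventually (\<lambda>c. det3 (0, 1) (x1, c * y1) (x2, c * y2) * k > 0) (at_right 0)"
proof -
  have "((\<lambda>c. det3 (0, 1) (x1, c * y1) (x2, c * y2) * k)
          \<longlongrightarrow> ((x2 - x1) + 0 * (x1 * y2 - y1 * x2)) * k) (at_right 0)"
    unfolding det3_squeeze_apex by (intro tendsto_intros)
  then show ?thesis
    using assms by (auto dest: order_tendstoD(1))
qed

lemma eventually_abs_mult_less:
  assumes "\<delta> > 0"
  shows "eventually (\<lambda>c. \<bar>c * k\<bar> < \<delta>) (at_right (0::real))"
proof -
  have "((\<lambda>c. c * k) \<longlongrightarrow> 0 * k) (at_right 0)"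
    by (intro tendsto_intros)
  from tendstoD[OF this assms] show ?thesis
    by (simp add: dist_real_def)
qed

lemma eventually_squeeze_realization:
  assumes "finite E" "realization E chi q"
    and orient: "\<And>a b c. a \<in> E - {u} \<Longrightarrow> b \<in> E - {u} \<Longrightarrow> c \<in> E - {u} \<Longrightarrow> distinct3 a b c \<Longrightarrow>
                  det3 (r a) (r b) (r c) * det3 (q a) (q b) (q c) > 0"
    and apex: "\<And>a b. a \<in> E - {u} \<Longrightarrow> b \<in> E - {u} \<Longrightarrow> a \<noteq> b \<Longrightarrow>
                  (fst (r b) - fst (r a)) * det3 (q u) (q a) (q b) > 0"
  shows "eventually (\<lambda>c. realization E chi (squeeze u r c)) (at_right 0)"
proof -
  \<comment> \<open>Triangles avoiding u are only rescaled by c > 0, and as c \<rightarrow> 0 a triangle through u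
     gets the sign of the horizontal order of its other two vertices.\<close>
  have "eventually (\<lambda>c. c > 0 \<and> (\<forall>(a, b) \<in> (E - {u}) \<times> (E - {u}). a \<noteq> b \<longrightarrow>
          det3 (squeeze u r c u) (squeeze u r c a) (squeeze u r c b) * det3 (q u) (q a) (q b) > 0))
          (at_right 0)"
    using assms(1) apex
    by (intro eventually_conj eventually_at_right_less eventually_ball_finite)
       (auto simp: squeeze_def intro: eventually_squeeze_apex_sign)
  then show ?thesis
  proof (rule eventually_mono)
    fix c assume c: "c > 0 \<and> (\<forall>(a, b) \<in> (E - {u}) \<times> (E - {u}). a \<noteq> b \<longrightarrow>
          det3 (squeeze u r c u) (squeeze u r c a) (squeeze u r c b) * det3 (q u) (q a) (q b) > 0)"
    show "realization E chi (squeeze u r c)"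
    proof (rule realization_transfer_apex[OF assms(2)])
      fix a b c' assume "a \<in> E - {u}" "b \<in> E - {u}" "c' \<in> E - {u}" "distinct3 a b c'"
      then show "det3 (squeeze u r c a) (squeeze u r c b) (squeeze u r c c')
                   * det3 (q a) (q b) (q c') > 0"
        using c orient[of a b c'] by (simp add: squeeze_def det3_scale_snd mult.assoc)
    qed (use c in auto)
  qed
qed

locale hull_frame =
  fixes E :: "'a set" and chi :: "'a \<Rightarrow> 'a \<Rightarrow> 'a \<Rightarrow> int" and q :: "'a \<Rightarrow> point"
    and u s w :: 'a
  assumes finite_E: "finite E" and realization: "realization E chi q"
    and in_E: "u \<in> E" "s \<in> E" "w \<in> E" and distinct: "distinct3 u s w"
    and succ: "\<And>z. z \<in> E - {u, s} \<Longrightarrow> det3 (q u) (q s) (q z) > 0"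
    and pred: "\<And>z. z \<in> E - {u, w} \<Longrightarrow> det3 (q w) (q u) (q z) > 0"
begin

lemma succ_hull_eq: "succ_hull E chi u = s"
  unfolding succ_hull_def
proof (rule the_equality)
  show "s \<in> E \<and> s \<noteq> u \<and> (\<forall>z\<in>E - {u, s}. chi u s z = 1)"
    using in_E distinct succ realization_det3(2)[OF realization] by (auto simp: distinct3_def)
next
  fix y assume y: "y \<in> E \<and> y \<noteq> u \<and> (\<forall>z\<in>E - {u, y}. chi u y z = 1)"
  show "y = s"
  proof (rule ccontr)
    assume "y \<noteq> s"
    then have "det3 (q u) (q y) (q s) > 0" "det3 (q u) (q s) (q y) > 0"
      using y in_E distinct succ realization_det3(2)[OF realization, of u y s]
      by (auto simp: distinct3_def)
    then show False
      using det3_swap_last[of "q u" "q s" "q y"] by simp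
  qed
qed

lemma pred_hull_eq: "pred_hull E chi u = w"
  unfolding pred_hull_def
proof (rule the_equality)
  show "w \<in> E \<and> w \<noteq> u \<and> (\<forall>z\<in>E - {u, w}. chi w u z = 1)"
    using in_E distinct pred realization_det3(2)[OF realization] by (auto simp: distinct3_def)
next
  fix y assume y: "y \<in> E \<and> y \<noteq> u \<and> (\<forall>z\<in>E - {u, y}. chi y u z = 1)"
  show "y = w"
  proof (rule ccontr)
    assume "y \<noteq> w"
    then have "det3 (q y) (q u) (q w) > 0" "det3 (q w) (q u) (q y) > 0"
      using y in_E distinct pred realization_det3(2)[OF realization, of y u w]
      by (auto simp: distinct3_def)
    then show False
      using det3_swap[of "q y" "q u" "q w"] det3_rotate[of "q w" "q u" "q y"] by linarith
  qed
qed

definition frame_chart :: "'a \<Rightarrow> point" where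
  "frame_chart e = chart (q u) (q s) (q w) (q e)"

lemma frame_det_pos: "det3 (q u) (q s) (q w) > 0"
  using succ in_E distinct by (auto simp: distinct3_def)

lemma succ_nonneg: "e \<in> E - {u} \<Longrightarrow> det3 (q u) (q s) (q e) \<ge> 0"
  using succ[of e] by (cases "e = s") auto

lemma pred_nonneg: "e \<in> E - {u} \<Longrightarrow> det3 (q w) (q u) (q e) \<ge> 0"
  using pred[of e] by (cases "e = w") auto

lemma frame_denom_pos:
  assumes "e \<in> E - {u}"
  shows "chart_denom (q u) (q s) (q w) (q e) > 0"
proof -
  have "det3 (q w) (q u) (q e) \<ge> 0" "det3 (q u) (q s) (q e) \<ge> 0"
    using assms by (rule pred_nonneg, rule succ_nonneg)
  moreover have "det3 (q w) (q u) (q e) > 0 \<or> det3 (q u) (q s) (q e) > 0"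
    using assms succ pred distinct by (cases "e = s") (auto simp: distinct3_def)
  ultimately show ?thesis
    by (auto simp: chart_denom_def)
qed

lemma frame_chart_succ: "frame_chart s = (0, 0)"
  and frame_chart_pred: "frame_chart w = (1, 0)"
proof -
  have "det3 (q w) (q u) (q s) = det3 (q u) (q s) (q w)"
    by (rule det3_rotate)
  then show "frame_chart s = (0, 0)" "frame_chart w = (1, 0)"
    using frame_det_pos by (simp_all add: frame_chart_def chart_def chart_denom_def)
qed

lemma frame_chart_orientation:
  assumes "a \<in> E - {u}" "b \<in> E - {u}" "c \<in> E - {u}" "distinct3 a b c"
  shows "det3 (frame_chart a) (frame_chart b) (frame_chart c) * det3 (q a) (q b) (q c) > 0"
proof -
  let ?N = "chart_denom (q u) (q s) (q w)"
  have "det3 (q a) (q b) (q c) \<noteq> 0"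
    using realization_det3(1)[OF realization] assms by auto
  then have "0 < (det3 (q u) (q s) (q w))\<^sup>2 * (det3 (q a) (q b) (q c))\<^sup>2"
    using frame_det_pos by simp
  also have "\<dots> = det3 (frame_chart a) (frame_chart b) (frame_chart c) * det3 (q a) (q b) (q c)
                  * (?N (q a) * ?N (q b) * ?N (q c))"
    using det3_chart[of "q u" "q s" "q w" "q a" "q b" "q c"] frame_denom_pos[of a]
      frame_denom_pos[of b] frame_denom_pos[of c] assms
    by (simp add: frame_chart_def power2_eq_square)
  finally show ?thesis
    by (rule zero_less_mult_pos2) (use frame_denom_pos assms in simp)
qed

lemma frame_chart_fst_orientation:
  assumes "a \<in> E - {u}" "b \<in> E - {u}" "a \<noteq> b"
  shows "(fst (frame_chart b) - fst (frame_chart a)) * det3 (q u) (q a) (q b) > 0"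
proof -
  let ?N = "chart_denom (q u) (q s) (q w)"
  have "?N (q a) \<noteq> 0" "?N (q b) \<noteq> 0"
    using frame_denom_pos assms by (metis less_irrefl)+
  then have "fst (frame_chart b) - fst (frame_chart a)
        = det3 (q u) (q s) (q w) * det3 (q u) (q a) (q b) / (?N (q a) * ?N (q b))"
    unfolding frame_chart_def by (rule fst_chart_diff)
  moreover have "det3 (q u) (q a) (q b) \<noteq> 0"
    using realization_det3(1)[OF realization] assms in_E by (auto simp: distinct3_def)
  then have "0 < det3 (q u) (q s) (q w) * (det3 (q u) (q a) (q b))\<^sup>2 / (?N (q a) * ?N (q b))"
    using frame_det_pos frame_denom_pos assms by simp
  ultimately show ?thesis
    by (simp add: power2_eq_square)
qed

lemma fst_frame_chart_le_1: "e \<in> E - {u} \<Longrightarrow> fst (frame_chart e) \<le> 1"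
  using frame_denom_pos[of e] pred_nonneg[of e]
  by (simp add: frame_chart_def chart_def chart_denom_def)

lemma fst_frame_chart_pos: "e \<in> E - {u, s} \<Longrightarrow> fst (frame_chart e) > 0"
  using frame_denom_pos[of e] succ[of e] by (simp add: frame_chart_def chart_def)

lemma right_squeezing_squeeze:
  assumes "realization E chi (squeeze u frame_chart c)"
    and flat: "\<And>e. e \<in> E - {u} \<Longrightarrow> \<bar>c * snd (frame_chart e)\<bar> < \<delta>"
    and slopes: "\<And>a b. a \<in> E - {u} \<Longrightarrow> b \<in> E - {u} \<Longrightarrow>
      \<bar>c * ((snd (frame_chart b) - snd (frame_chart a)) / (fst (frame_chart b) - fst (frame_chart a)))\<bar>
        < \<delta>"
    and \<epsilon>_le: "\<And>e. e \<in> E - {u, s} \<Longrightarrow> \<epsilon> \<le> fst (frame_chart e)"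
  shows "right_squeezing E chi u \<delta> \<epsilon> (squeeze u frame_chart c)"
proof -
  let ?p = "squeeze u frame_chart c"
  have p_outside: "?p e = (fst (frame_chart e), c * snd (frame_chart e))" if "e \<noteq> u" for e
    using that by (simp add: squeeze_def)
  have p_succ: "?p s = (0, 0)" and p_pred: "?p w = (1, 0)"
    using distinct frame_chart_succ frame_chart_pred p_outside[of s] p_outside[of w]
    by (auto simp: distinct3_def)
  have box: "?p e \<in> {\<epsilon>..1} \<times> {-\<delta>..\<delta>}" if "e \<in> E" "?p e \<noteq> ?p u \<and> ?p e \<noteq> ?p s" for e
  proof -
    from that have "e \<in> E - {u, s}"
      by auto
    then show ?thesis
      using flat[of e] \<epsilon>_le[of e] fst_frame_chart_le_1[of e] by (auto simp: p_outside)
  qed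
  have slope: "fst (?p a) \<noteq> fst (?p b) \<and>
      (snd (?p b) - snd (?p a)) / (fst (?p b) - fst (?p a)) \<in> {-\<delta>..\<delta>}"
    if "a \<in> E - {u}" "b \<in> E - {u}" "?p a \<noteq> ?p b" for a b
  proof -
    have "a \<noteq> b"
      using that(3) by auto
    with that have "fst (?p a) \<noteq> fst (?p b)"
      using frame_chart_fst_orientation[of a b] by (auto simp: p_outside)
    moreover have "\<bar>(snd (?p b) - snd (?p a)) / (fst (?p b) - fst (?p a))\<bar> < \<delta>"
      using slopes[OF that(1,2)] that by (simp add: p_outside right_diff_distrib)
    ultimately show ?thesis
      by (auto simp only: atLeastAtMost_iff abs_less_iff)
  qed
  show ?thesis
    unfolding right_squeezing_def succ_hull_eq pred_hull_eq
    using assms(1) p_succ p_pred box slope by (auto simp: squeeze_def)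
qed

lemma eventually_right_squeezing:
  assumes "\<delta> > 0" and "\<And>e. e \<in> E - {u, s} \<Longrightarrow> \<epsilon> \<le> fst (frame_chart e)"
  shows "eventually (\<lambda>c. right_squeezing E chi u \<delta> \<epsilon> (squeeze u frame_chart c)) (at_right 0)"
proof -
  let ?r = frame_chart
  have "eventually (\<lambda>c. realization E chi (squeeze u ?r c)
          \<and> (\<forall>e\<in>E - {u}. \<bar>c * snd (?r e)\<bar> < \<delta>)
          \<and> (\<forall>a\<in>E - {u}. \<forall>b\<in>E - {u}.
               \<bar>c * ((snd (?r b) - snd (?r a)) / (fst (?r b) - fst (?r a)))\<bar> < \<delta>)) (at_right 0)"
    using finite_E in_E realization frame_chart_orientation frame_chart_fst_orientation assms(1)
    by (intro eventually_conj eventually_squeeze_realization eventually_ball_finite ballI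
        eventually_abs_mult_less) auto
  then show ?thesis
  proof (rule eventually_mono)
    fix c assume "realization E chi (squeeze u ?r c)
          \<and> (\<forall>e\<in>E - {u}. \<bar>c * snd (?r e)\<bar> < \<delta>)
          \<and> (\<forall>a\<in>E - {u}. \<forall>b\<in>E - {u}.
               \<bar>c * ((snd (?r b) - snd (?r a)) / (fst (?r b) - fst (?r a)))\<bar> < \<delta>)"
    then show "right_squeezing E chi u \<delta> \<epsilon> (squeeze u ?r c)"
      using assms(2) by (intro right_squeezing_squeeze) auto
  qed
qed

theorem right_squeezing_exists: "\<exists>\<epsilon>>0. \<forall>\<delta>>0. \<exists>p. right_squeezing E chi u \<delta> \<epsilon> p"
proof -
  define \<epsilon> where "\<epsilon> = Min ((\<lambda>e. fst (frame_chart e)) ` (E - {u, s}))"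
  have "\<epsilon> > 0"
    unfolding \<epsilon>_def using finite_E in_E distinct fst_frame_chart_pos
    by (subst Min_gr_iff) (auto simp: distinct3_def)
  moreover have "\<epsilon> \<le> fst (frame_chart e)" if "e \<in> E - {u, s}" for e
    unfolding \<epsilon>_def using finite_E that by auto
  then have "\<exists>p. right_squeezing E chi u \<delta> \<epsilon> p" if "\<delta> > 0" for \<delta>
    using eventually_happens'[OF trivial_limit_at_right_real eventually_right_squeezing[OF that]]
    by blast
  ultimately show ?thesis
    by blast
qed

end

lemma exists_outside_pair:
  assumes "finite E" "card E \<ge> 3"
  shows "\<exists>z\<in>E. z \<notin> {a, b}"
proof (rule ccontr)
  assume "\<not> ?thesis"
  then have "card E \<le> card {a, b}"
    using assms(1) by (intro card_mono) auto
  also have "\<dots> \<le> 2"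
    by (simp add: card_insert_if)
  finally show False
    using assms(2) by simp
qed

lemma realization_hull_neighbours:
  assumes "finite E" "card E \<ge> 3" and q: "realization E chi q" and "extreme E chi u"
  obtains s w where "s \<in> E" "s \<noteq> u" "w \<in> E" "w \<noteq> u"
    and "\<And>z. z \<in> E - {u, s} \<Longrightarrow> det3 (q u) (q s) (q z) > 0"
    and "\<And>z. z \<in> E - {u, w} \<Longrightarrow> det3 (q w) (q u) (q z) > 0"
proof -
  have u: "u \<in> E"
    using assms(4) by (simp add: extreme_def)
  obtain y c0 where y: "y \<in> E" "y \<noteq> u" and y_side: "\<And>z. z \<in> E - {u, y} \<Longrightarrow> chi u y z = c0"
    using assms(4) unfolding extreme_def by blast
  note third = exists_outside_pair[OF assms(1,2), of u y]
  have nondeg: "\<And>a b. a \<in> E - {u} \<Longrightarrow> b \<in> E - {u} \<Longrightarrow> a \<noteq> b \<Longrightarrow> det3 (q u) (q a) (q b) \<noteq> 0"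
    using realization_det3(1)[OF q] u by (auto simp: distinct3_def)
  have y_orient: "chi u y z = 1 \<longleftrightarrow> det3 (q u) (q y) (q z) > 0"
    and y_nondeg: "det3 (q u) (q y) (q z) \<noteq> 0" if "z \<in> E - {u, y}" for z
    using realization_det3[OF q, of u y z] u y that by (auto simp: distinct3_def)
  show ?thesis
  proof (cases "c0 = 1")
    case True
    have left: "det3 (q u) (q y) (q z) > 0" if "z \<in> E - {u, y}" for z
      using y_side[OF that] y_orient[OF that] True by simp
    obtain w where w: "w \<in> E" "w \<noteq> u" "\<And>z. z \<in> E - {u, w} \<Longrightarrow> det3 (q w) (q u) (q z) > 0"
      using hull_pred_exists[OF assms(1) third left nondeg] by blast
    show ?thesis
      by (rule that[OF y w(1,2) left w(3)])
  next
    case False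
    have right: "det3 (q y) (q u) (q z) > 0" if "z \<in> E - {u, y}" for z
      using y_side[OF that] y_orient[OF that] y_nondeg[OF that] False det3_swap[of "q y" "q u" "q z"]
      by linarith
    obtain s where s: "s \<in> E" "s \<noteq> u" "\<And>z. z \<in> E - {u, s} \<Longrightarrow> det3 (q u) (q s) (q z) > 0"
      using hull_succ_exists[OF assms(1) third right nondeg] by blast
    show ?thesis
      by (rule that[OF s(1,2) y s(3) right])
  qed
qed

lemma realization_hull_frame:
  assumes "finite E" "card E \<ge> 3" and q: "realization E chi q" and "extreme E chi u"
  obtains s w where "hull_frame E chi q u s w"
proof -
  obtain s w where sw: "s \<in> E" "s \<noteq> u" "w \<in> E" "w \<noteq> u"
    and succ: "\<And>z. z \<in> E - {u, s} \<Longrightarrow> det3 (q u) (q s) (q z) > 0"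
    and pred: "\<And>z. z \<in> E - {u, w} \<Longrightarrow> det3 (q w) (q u) (q z) > 0"
    using realization_hull_neighbours[OF assms] by blast
  have "s \<noteq> w"
  proof
    assume "s = w"
    obtain z where "z \<in> E" "z \<notin> {u, s}"
      using exists_outside_pair[OF assms(1,2)] by blast
    then show False
      using succ[of z] pred[of z] \<open>s = w\<close> det3_swap[of "q s" "q u" "q z"] by simp
  qed
  have "u \<in> E"
    using assms(4) by (simp add: extreme_def)
  then have "hull_frame E chi q u s w"
    by unfold_locales (use assms(1) q sw succ pred \<open>s \<noteq> w\<close> in \<open>auto simp: distinct3_def\<close>)
  then show ?thesis
    by (rule that)
qed

theorem lemma2p6:
  fixes E :: "'a set" and chi :: "'a \<Rightarrow> 'a \<Rightarrow> 'a \<Rightarrow> int" and u :: 'a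
  assumes "finite E" and "card E \<ge> 3"
    and "rooted_chirotope E chi u"
    and "realizable E chi"
  shows "\<exists>\<epsilon>>0. \<forall>\<delta>>0. \<exists>p. right_squeezing E chi u \<delta> \<epsilon> p"
proof -
  obtain q where "realization E chi q"
    using assms(4) by (auto simp: realizable_def)
  moreover have "extreme E chi u"
    using assms(3) by (simp add: rooted_chirotope_def)
  ultimately obtain s w where "hull_frame E chi q u s w"
    using realization_hull_frame[OF assms(1,2)] by blast
  then show ?thesis
    by (rule hull_frame.right_squeezing_exists)
qed

end
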